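(* Let $p\ge 2$, let $E$ be a Banach space and $f=\sum_{i\in I}d_i$ a finite sum in $E$. Let $(\varepsilon_i)_{i\in I}$ be independent random variables with $P(\varepsilon_i=\pm1)=1/2$, $S=\big(\mathbb E\|\sum_{i\in I}\varepsilon_id_i\|^p\big)^{1/p}$, and $f^{\otimes p}=f\otimes\cdots\otimes f$ ($p$ times). Then $$\Big\|f^{\otimes p}-\sum_{g\colon\{1,\dots,p\}\to I\ \text{injective}}d_{g(1)}\otimes\cdots\otimes d_{g(p)}\Big\|_\wedge\le\sum_{0\le s\le p-2}\binom{p}{s}(p-s)!\,\|f\|^s S^{p-s}.$$
   Context: $\|\cdot\|_\wedge$ is the projective tensor norm on the $p$-fold projective tensor product $E\widehat\otimes\cdots\widehat\otimes E$. *)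

theory Defs
  imports "HOL-Probability.Probability"
begin

definition multilinear_form :: "nat \<Rightarrow> ((nat \<Rightarrow> 'a::real_vector) \<Rightarrow> real) \<Rightarrow> bool" where
  "multilinear_form p \<phi> \<longleftrightarrow>
     (\<forall>x y. (\<forall>j\<in>{1..p}. x j = y j) \<longrightarrow> \<phi> x = \<phi> y) \<and>
     (\<forall>x j. j \<in> {1..p} \<longrightarrow> linear (\<lambda>v. \<phi> (x(j := v))))"

(* An element t of the algebraic p-fold tensor product E \<otimes> ... \<otimes> E is identified with
   its action on p-linear forms (universal property). *)
definition proj_tensor_norm ::
    "nat \<Rightarrow> (((nat \<Rightarrow> 'a::real_normed_vector) \<Rightarrow> real) \<Rightarrow> real) \<Rightarrow> real" where
  "proj_tensor_norm p t = Inf {(\<Sum>k<n. \<Prod>j\<in>{1..p}. norm ((x :: nat \<Rightarrow> nat \<Rightarrow> 'a) k j)) | n x.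
       \<forall>\<phi>. multilinear_form p \<phi> \<longrightarrow> t \<phi> = (\<Sum>k<n. \<phi> (x k))}"

end

theory Submission
  imports Defs
begin

(*
  Let sigma_1, ..., sigma_p be independent uniform sign vectors on I. The expectation of
  prod_j sigma_j(h j) sigma_(tau j)(h j) is 1 if h o tau = h on {1..p} and 0 otherwise, and the
  signed number of permutations tau with h o tau = h is 1 if h is injective and 0 otherwise. Hence,
  for every p-linear form phi,
    sum over injective g of phi(d_(g 1), ..., d_(g p)) = sum_tau sign tau * E phi(x_tau),
  where x_tau j = sum_i sigma_j(i) sigma_(tau j)(i) d_i. The term tau = id is phi(f, ..., f), so
  f^(tensor p) minus the injective sum is an average of elementary tensors indexed by tau <> id,
  and its projective norm is at most sum over tau <> id of E prod_j ||x_tau j||.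
  A fixed point j of tau gives x_tau j = f. For the other coordinates sigma_j sigma_(tau j) is again
  a uniform sign vector, so AM-GM and the power-mean inequality bound the expectation of their
  product by S^(p-s), s the number of fixed points. Finally s <= p - 2, and at most
  C(p,s) (p-s)! permutations have exactly s fixed points.
  All expectations are averages over the finitely many sign patterns.
*)

section \<open>Multilinear forms and the projective tensor norm\<close>

lemma sum_PiE_insert:
  assumes "a \<notin> A" "finite A" "finite (B a)"
  shows "(\<Sum>h\<in>PiE (insert a A) B. g h) = (\<Sum>b\<in>B a. \<Sum>h\<in>PiE A B. g (h(a := b)))"
proof -
  have "(\<Sum>h\<in>PiE (insert a A) B. g h) = (\<Sum>z\<in>B a \<times> PiE A B. g ((\<lambda>(y, h). h(a := y)) z))"
    unfolding PiE_insert_eq by (rule sum.reindex[OF inj_combinator[OF assms(1)], unfolded comp_def])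
  also have "\<dots> = (\<Sum>b\<in>B a. \<Sum>h\<in>PiE A B. g (h(a := b)))"
    by (simp add: sum.cartesian_product split_def)
  finally show ?thesis .
qed

lemma multilinear_form_linear:
  assumes "multilinear_form p \<phi>" "j \<in> {1..p}"
  shows "linear (\<lambda>v. \<phi> (x(j := v)))"
  using assms unfolding multilinear_form_def by blast

lemma multilinear_form_cong:
  assumes "multilinear_form p \<phi>" "\<And>j. j \<in> {1..p} \<Longrightarrow> x j = y j"
  shows "\<phi> x = \<phi> y"
  using assms unfolding multilinear_form_def by blast

lemma multilinear_form_expand_on:
  fixes c :: "nat \<Rightarrow> 'i \<Rightarrow> real"
  assumes ml: "multilinear_form p \<phi>" and "finite I" "finite J" "J \<subseteq> {1..p}"
  shows "\<phi> (\<lambda>j. if j \<in> J then \<Sum>i\<in>I. c j i *\<^sub>R d i else x j) =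
    (\<Sum>h\<in>PiE J (\<lambda>_. I). (\<Prod>j\<in>J. c j (h j)) * \<phi> (\<lambda>j. if j \<in> J then d (h j) else x j))"
  using assms(3,4)
proof (induction J arbitrary: x rule: finite_induct)
  case empty
  then show ?case by simp
next
  case (insert a J)
  let ?v = "\<lambda>j. \<Sum>i\<in>I. c j i *\<^sub>R d i"
  let ?y = "\<lambda>j. if j \<in> J then ?v j else x j"
  have lin: "linear (\<lambda>v. \<phi> (?y(a := v)))"
    using multilinear_form_linear[OF ml] insert.prems by auto
  have "\<phi> (\<lambda>j. if j \<in> insert a J then ?v j else x j) = \<phi> (?y(a := ?v a))"
    by (rule arg_cong[where f = \<phi>]) auto
  also have "\<dots> = (\<Sum>i\<in>I. c a i * \<phi> (?y(a := d i)))"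
    by (simp only: linear_sum[OF lin] linear_cmul[OF lin] real_scaleR_def)
  also have "\<dots> = (\<Sum>i\<in>I. \<Sum>h\<in>PiE J (\<lambda>_. I). (\<Prod>j\<in>insert a J. c j ((h(a := i)) j)) *
      \<phi> (\<lambda>j. if j \<in> insert a J then d ((h(a := i)) j) else x j))"
  proof (rule sum.cong[OF refl])
    fix i
    have "?y(a := d i) = (\<lambda>j. if j \<in> J then ?v j else (x(a := d i)) j)"
      using insert.hyps by auto
    moreover have "(\<lambda>j. if j \<in> J then d (h j) else (x(a := d i)) j) =
        (\<lambda>j. if j \<in> insert a J then d ((h(a := i)) j) else x j)" for h
      using insert.hyps by auto
    moreover have "(\<Prod>j\<in>insert a J. c j ((h(a := i)) j)) = c a i * (\<Prod>j\<in>J. c j (h j))" for h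
      using insert.hyps by (auto intro!: prod.cong)
    ultimately show "c a i * \<phi> (?y(a := d i)) = (\<Sum>h\<in>PiE J (\<lambda>_. I).
        (\<Prod>j\<in>insert a J. c j ((h(a := i)) j)) * \<phi> (\<lambda>j. if j \<in> insert a J then d ((h(a := i)) j) else x j))"
      using insert.IH[of "x(a := d i)"] insert.prems by (simp add: sum_distrib_left mult.assoc)
  qed
  also have "\<dots> = (\<Sum>h\<in>PiE (insert a J) (\<lambda>_. I). (\<Prod>j\<in>insert a J. c j (h j)) *
      \<phi> (\<lambda>j. if j \<in> insert a J then d (h j) else x j))"
    using insert.hyps assms(2) by (intro sum_PiE_insert[symmetric]) auto
  finally show ?case .
qed

lemma multilinear_form_expand:
  fixes c :: "nat \<Rightarrow> 'i \<Rightarrow> real"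
  assumes ml: "multilinear_form p \<phi>" and "finite I"
  shows "\<phi> (\<lambda>j. \<Sum>i\<in>I. c j i *\<^sub>R d i) =
    (\<Sum>h\<in>PiE {1..p} (\<lambda>_. I). (\<Prod>j\<in>{1..p}. c j (h j)) * \<phi> (\<lambda>j. d (h j)))"
proof -
  have "\<phi> (\<lambda>j. \<Sum>i\<in>I. c j i *\<^sub>R d i) = \<phi> (\<lambda>j. if j \<in> {1..p} then \<Sum>i\<in>I. c j i *\<^sub>R d i else 0)"
    by (rule multilinear_form_cong[OF ml]) simp
  also have "\<dots> = (\<Sum>h\<in>PiE {1..p} (\<lambda>_. I). (\<Prod>j\<in>{1..p}. c j (h j)) *
      \<phi> (\<lambda>j. if j \<in> {1..p} then d (h j) else 0))"
    using assms by (intro multilinear_form_expand_on) auto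
  also have "\<dots> = (\<Sum>h\<in>PiE {1..p} (\<lambda>_. I). (\<Prod>j\<in>{1..p}. c j (h j)) * \<phi> (\<lambda>j. d (h j)))"
    by (intro sum.cong refl arg_cong2[where f = "(*)"] multilinear_form_cong[OF ml]) auto
  finally show ?thesis .
qed

lemma proj_tensor_norm_le:
  fixes x :: "'k \<Rightarrow> nat \<Rightarrow> 'a::real_normed_vector"
  assumes "finite K" "p \<ge> 1"
    and rep: "\<And>\<phi>. multilinear_form p \<phi> \<Longrightarrow> t \<phi> = (\<Sum>k\<in>K. c k * \<phi> (x k))"
  shows "proj_tensor_norm p t \<le> (\<Sum>k\<in>K. \<bar>c k\<bar> * (\<Prod>j\<in>{1..p}. norm (x k j)))"
proof -
  obtain e where e: "bij_betw e {..<card K} K"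
    using ex_bij_betw_nat_finite[OF assms(1)] by (auto simp: atLeast0LessThan)
  \<comment> \<open>absorb the coefficient into the first factor of each elementary tensor\<close>
  define y where "y = (\<lambda>m. (x (e m))(1 := c (e m) *\<^sub>R x (e m) 1))"
  have "{1..p} = insert 1 {2..p}" using assms(2) by auto
  then have cost: "(\<Prod>j\<in>{1..p}. norm (y m j)) = \<bar>c (e m)\<bar> * (\<Prod>j\<in>{1..p}. norm (x (e m) j))" for m
    by (simp add: y_def)
  have "\<phi> (y m) = c (e m) * \<phi> (x (e m))" if ml: "multilinear_form p \<phi>" for \<phi> m
    using linear_cmul[OF multilinear_form_linear[OF ml, of 1 "x (e m)"]] assms(2) by (simp add: y_def)
  then have "t \<phi> = (\<Sum>m<card K. \<phi> (y m))" if "multilinear_form p \<phi>" for \<phi>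
    using rep[OF that] sum.reindex_bij_betw[OF e, of "\<lambda>k. c k * \<phi> (x k)"] that by simp
  then have mem: "(\<Sum>m<card K. \<Prod>j\<in>{1..p}. norm (y m j)) \<in>
      {(\<Sum>k<n. \<Prod>j\<in>{1..p}. norm ((x :: nat \<Rightarrow> nat \<Rightarrow> 'a) k j)) | n x.
         \<forall>\<phi>. multilinear_form p \<phi> \<longrightarrow> t \<phi> = (\<Sum>k<n. \<phi> (x k))}"
    by blast
  have "proj_tensor_norm p t \<le> (\<Sum>m<card K. \<Prod>j\<in>{1..p}. norm (y m j))"
    unfolding proj_tensor_norm_def
    by (rule cInf_lower[OF mem], rule bdd_belowI[of _ 0]) (auto intro!: sum_nonneg prod_nonneg)
  also have "\<dots> = (\<Sum>k\<in>K. \<bar>c k\<bar> * (\<Prod>j\<in>{1..p}. norm (x k j)))"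
    unfolding cost using sum.reindex_bij_betw[OF e] by simp
  finally show ?thesis .
qed

section \<open>Sums over sign vectors\<close>

definition sign_vectors :: "'i set \<Rightarrow> ('i \<Rightarrow> real) set" where
  "sign_vectors I = I \<rightarrow>\<^sub>E {-1, 1}"

definition sign_tuples :: "nat \<Rightarrow> 'i set \<Rightarrow> (nat \<Rightarrow> 'i \<Rightarrow> real) set" where
  "sign_tuples p I = {1..p} \<rightarrow>\<^sub>E sign_vectors I"

lemma finite_sign_vectors: "finite I \<Longrightarrow> finite (sign_vectors I)"
  unfolding sign_vectors_def by (intro finite_PiE) auto

lemma card_sign_vectors: "finite I \<Longrightarrow> card (sign_vectors I) = 2 ^ card I"
  unfolding sign_vectors_def by (simp add: card_PiE numeral_2_eq_2)

lemma sign_vectors_mult_self: "\<rho> \<in> sign_vectors I \<Longrightarrow> i \<in> I \<Longrightarrow> \<rho> i * \<rho> i = 1"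
  unfolding sign_vectors_def by (auto simp: PiE_iff)

lemma finite_sign_tuples: "finite I \<Longrightarrow> finite (sign_tuples p I)"
  unfolding sign_tuples_def by (intro finite_PiE finite_sign_vectors) auto

lemma card_sign_tuples: "finite I \<Longrightarrow> card (sign_tuples p I) = card (sign_vectors I) ^ p"
  unfolding sign_tuples_def by (simp add: card_PiE)

lemma card_sign_tuples_pos: "finite I \<Longrightarrow> card (sign_tuples p I) > 0"
  by (simp add: card_sign_tuples card_sign_vectors)

lemma sign_tuples_component: "\<sigma> \<in> sign_tuples p I \<Longrightarrow> j \<in> {1..p} \<Longrightarrow> \<sigma> j \<in> sign_vectors I"
  unfolding sign_tuples_def by auto

lemma sum_sign_vectors_mult:
  assumes "finite I" "a \<in> I" "b \<in> I"
  shows "(\<Sum>\<rho>\<in>sign_vectors I. \<rho> a * \<rho> b) = (if a = b then real (card (sign_vectors I)) else 0)"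
proof -
  define g where "g = (\<lambda>i (s::real). (if i = a then s else 1) * (if i = b then s else 1))"
  have "\<rho> a * \<rho> b = (\<Prod>i\<in>I. g i (\<rho> i))" for \<rho>
    using assms by (cases "a = b") (simp_all add: g_def prod.distrib)
  then have "(\<Sum>\<rho>\<in>sign_vectors I. \<rho> a * \<rho> b) = (\<Prod>i\<in>I. \<Sum>s\<in>{-1, 1}. g i s)"
    using prod_sum_PiE[OF assms(1), of "\<lambda>_. {-1, 1}" g] by (simp add: sign_vectors_def)
  also have "\<dots> = (if a = b then real (card (sign_vectors I)) else 0)"
  proof (cases "a = b")
    case True
    then have "(\<Prod>i\<in>I. \<Sum>s\<in>{-1, 1}. g i s) = (\<Prod>i\<in>I. 2)"
      by (intro prod.cong) (auto simp: g_def)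
    then show ?thesis using True assms(1) by (simp add: card_sign_vectors)
  next
    case False
    then have "(\<Sum>s\<in>{-1, 1}. g a s) = 0" by (simp add: g_def)
    then show ?thesis using False assms by auto
  qed
  finally show ?thesis .
qed

lemma sum_sign_tuples_prod:
  fixes G :: "nat \<Rightarrow> ('i \<Rightarrow> real) \<Rightarrow> real"
  assumes "finite I"
  shows "(\<Sum>\<sigma>\<in>sign_tuples p I. \<Prod>j\<in>{1..p}. G j (\<sigma> j)) = (\<Prod>j\<in>{1..p}. \<Sum>\<rho>\<in>sign_vectors I. G j \<rho>)"
  unfolding sign_tuples_def using prod_sum_PiE[of "{1..p}" "\<lambda>_. sign_vectors I" G] finite_sign_vectors[OF assms]
  by simp

lemma sum_sign_tuples_permuted_prod:
  fixes h :: "nat \<Rightarrow> 'i"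
  assumes "finite I" "\<tau> permutes {1..p}" "h \<in> {1..p} \<rightarrow>\<^sub>E I"
  shows "(\<Sum>\<sigma>\<in>sign_tuples p I. \<Prod>j\<in>{1..p}. \<sigma> j (h j) * \<sigma> (\<tau> j) (h j)) =
    of_bool (\<forall>j\<in>{1..p}. h (\<tau> j) = h j) * real (card (sign_tuples p I))"
proof -
  have inv_in: "inv \<tau> j \<in> {1..p}" if "j \<in> {1..p}" for j
    using that permutes_in_image[OF permutes_inv[OF assms(2)]] by simp
  have "(\<Prod>j\<in>{1..p}. \<sigma> (\<tau> j) (h j)) = (\<Prod>j\<in>{1..p}. \<sigma> j (h (inv \<tau> j)))" for \<sigma> :: "nat \<Rightarrow> 'i \<Rightarrow> real"
    using prod.permute[OF assms(2), of "\<lambda>j. \<sigma> j (h (inv \<tau> j))"] permutes_inverses(2)[OF assms(2)] by simp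
  then have "(\<Sum>\<sigma>\<in>sign_tuples p I. \<Prod>j\<in>{1..p}. \<sigma> j (h j) * \<sigma> (\<tau> j) (h j)) =
      (\<Sum>\<sigma>\<in>sign_tuples p I. \<Prod>j\<in>{1..p}. \<sigma> j (h j) * \<sigma> j (h (inv \<tau> j)))"
    by (simp only: prod.distrib)
  also have "\<dots> = (\<Prod>j\<in>{1..p}. \<Sum>\<rho>\<in>sign_vectors I. \<rho> (h j) * \<rho> (h (inv \<tau> j)))"
    by (rule sum_sign_tuples_prod[OF assms(1)])
  also have "\<dots> = (\<Prod>j\<in>{1..p}. if h j = h (inv \<tau> j) then real (card (sign_vectors I)) else 0)"
    using assms(3) inv_in by (intro prod.cong refl sum_sign_vectors_mult[OF assms(1)]) auto
  also have "\<dots> = of_bool (\<forall>j\<in>{1..p}. h j = h (inv \<tau> j)) * real (card (sign_tuples p I))"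
    by (cases "\<forall>j\<in>{1..p}. h j = h (inv \<tau> j)") (auto simp: card_sign_tuples[OF assms(1)])
  also have "(\<forall>j\<in>{1..p}. h j = h (inv \<tau> j)) \<longleftrightarrow> (\<forall>j\<in>{1..p}. h (\<tau> j) = h j)"
    using inv_in permutes_in_image[OF assms(2)] permutes_inverses[OF assms(2)] by metis
  finally show ?thesis .
qed

section \<open>The injective part of a tensor power\<close>

text \<open>The stabiliser of \<open>h\<close> in the symmetric group is trivial when \<open>h\<close> is injective, and otherwise
  contains a transposition, right multiplication by which pairs its even with its odd elements.\<close>
lemma sum_sign_stabilizer:
  fixes p :: nat
  shows "(\<Sum>\<tau> | \<tau> permutes {1..p} \<and> (\<forall>j\<in>{1..p}. h (\<tau> j) = h j). real_of_int (sign \<tau>)) =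
    of_bool (inj_on h {1..p})"
proof (cases "inj_on h {1..p}")
  case True
  have "\<tau> = id" if "\<tau> permutes {1..p}" "\<forall>j\<in>{1..p}. h (\<tau> j) = h j" for \<tau>
  proof
    fix j
    show "\<tau> j = id j"
      using that permutes_in_image[OF that(1), of j] permutes_not_in[OF that(1), of j]
        inj_onD[OF True, of "\<tau> j" j] by (cases "j \<in> {1..p}") auto
  qed
  then have "{\<tau>. \<tau> permutes {1..p} \<and> (\<forall>j\<in>{1..p}. h (\<tau> j) = h j)} = {id}"
    by auto
  then show ?thesis using True by simp
next
  case False
  let ?Q = "{\<tau>. \<tau> permutes {1..p} \<and> (\<forall>j\<in>{1..p}. h (\<tau> j) = h j)}"
  obtain a b where ab: "a \<in> {1..p}" "b \<in> {1..p}" "a \<noteq> b" "h a = h b"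
    using False unfolding inj_on_def by blast
  let ?s = "Transposition.transpose a b"
  have s: "?s permutes {1..p}" using permutes_swap_id[OF ab(1,2)] .
  have "\<tau> \<circ> ?s \<in> ?Q" if "\<tau> \<in> ?Q" for \<tau>
    using that permutes_compose[OF s] permutes_in_image[OF s] ab(4)
    by (auto simp: Transposition.transpose_def)
  moreover have "\<tau> \<circ> ?s \<circ> ?s = \<tau>" for \<tau> :: "nat \<Rightarrow> nat"
    by (simp add: comp_assoc)
  ultimately have "(\<Sum>\<tau>\<in>?Q. real_of_int (sign \<tau>)) = (\<Sum>\<tau>\<in>?Q. real_of_int (sign (\<tau> \<circ> ?s)))"
    by (intro sum.reindex_bij_witness[where i = "\<lambda>\<tau>. \<tau> \<circ> ?s" and j = "\<lambda>\<tau>. \<tau> \<circ> ?s"]) auto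
  also have "\<dots> = - (\<Sum>\<tau>\<in>?Q. real_of_int (sign \<tau>))"
  proof -
    have "sign (\<tau> \<circ> ?s) = - sign \<tau>" if "\<tau> \<in> ?Q" for \<tau>
      using that ab(3) permutes_imp_permutation[of "{1..p}" \<tau>]
      by (simp add: sign_compose permutation_swap_id sign_swap_id)
    then show ?thesis by (simp add: sum_negf[symmetric])
  qed
  finally show ?thesis using False by simp
qed

lemma sum_injective_eq_signed_average:
  fixes d :: "'i \<Rightarrow> 'a::real_vector"
  assumes ml: "multilinear_form p \<phi>" and fin: "finite I"
  shows "(\<Sum>g \<in> {g. g \<in> {1..p} \<rightarrow>\<^sub>E I \<and> inj_on g {1..p}}. \<phi> (\<lambda>j. d (g j))) =
    (\<Sum>\<tau> | \<tau> permutes {1..p}. real_of_int (sign \<tau>) *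
       (\<Sum>\<sigma>\<in>sign_tuples p I. \<phi> (\<lambda>j. \<Sum>i\<in>I. (\<sigma> j i * \<sigma> (\<tau> j) i) *\<^sub>R d i)) /
       real (card (sign_tuples p I)))"
proof -
  let ?P = "{\<tau>. \<tau> permutes {1..p}}"
  let ?H = "{1..p} \<rightarrow>\<^sub>E I"
  let ?N = "real (card (sign_tuples p I))"
  let ?stab = "\<lambda>h \<tau>. \<forall>j\<in>{1..p}. h (\<tau> j) = h j"
  have finH: "finite ?H" using fin by (intro finite_PiE) auto
  have finP: "finite ?P" using finite_permutations[of "{1..p}"] by simp
  have average: "(\<Sum>\<sigma>\<in>sign_tuples p I. \<phi> (\<lambda>j. \<Sum>i\<in>I. (\<sigma> j i * \<sigma> (\<tau> j) i) *\<^sub>R d i)) / ?N =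
      (\<Sum>h\<in>?H. of_bool (?stab h \<tau>) * \<phi> (\<lambda>j. d (h j)))" if \<tau>: "\<tau> permutes {1..p}" for \<tau>
  proof -
    have "(\<Sum>\<sigma>\<in>sign_tuples p I. \<phi> (\<lambda>j. \<Sum>i\<in>I. (\<sigma> j i * \<sigma> (\<tau> j) i) *\<^sub>R d i)) =
        (\<Sum>h\<in>?H. (\<Sum>\<sigma>\<in>sign_tuples p I. \<Prod>j\<in>{1..p}. \<sigma> j (h j) * \<sigma> (\<tau> j) (h j)) * \<phi> (\<lambda>j. d (h j)))"
      by (simp add: multilinear_form_expand[OF ml fin] sum_distrib_right) (rule sum.swap)
    also have "\<dots> = (\<Sum>h\<in>?H. of_bool (?stab h \<tau>) * ?N * \<phi> (\<lambda>j. d (h j)))"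
      by (intro sum.cong refl, subst sum_sign_tuples_permuted_prod[OF fin \<tau>]) auto
    finally show ?thesis
      using card_sign_tuples_pos[OF fin, of p] by (simp add: sum_divide_distrib)
  qed
  have "(\<Sum>\<tau>\<in>?P. real_of_int (sign \<tau>) *
       (\<Sum>\<sigma>\<in>sign_tuples p I. \<phi> (\<lambda>j. \<Sum>i\<in>I. (\<sigma> j i * \<sigma> (\<tau> j) i) *\<^sub>R d i)) / ?N) =
      (\<Sum>\<tau>\<in>?P. real_of_int (sign \<tau>) *
       ((\<Sum>\<sigma>\<in>sign_tuples p I. \<phi> (\<lambda>j. \<Sum>i\<in>I. (\<sigma> j i * \<sigma> (\<tau> j) i) *\<^sub>R d i)) / ?N))"
    by (simp only: times_divide_eq_right)
  also have "\<dots> = (\<Sum>\<tau>\<in>?P. \<Sum>h\<in>?H. real_of_int (sign \<tau>) * of_bool (?stab h \<tau>) * \<phi> (\<lambda>j. d (h j)))"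
    by (intro sum.cong refl) (simp add: average sum_distrib_left mult.assoc)
  also have "\<dots> = (\<Sum>h\<in>?H. (\<Sum>\<tau>\<in>?P. real_of_int (sign \<tau>) * of_bool (?stab h \<tau>)) * \<phi> (\<lambda>j. d (h j)))"
    by (subst sum.swap) (simp add: sum_distrib_right)
  also have "\<dots> = (\<Sum>h\<in>?H. of_bool (inj_on h {1..p}) * \<phi> (\<lambda>j. d (h j)))"
    using finP by (simp add: sum_sign_stabilizer Int_def del: One_nat_def)
  also have "\<dots> = (\<Sum>g \<in> {g. g \<in> ?H \<and> inj_on g {1..p}}. \<phi> (\<lambda>j. d (g j)))"
    using finH by (simp add: Int_def)
  finally show ?thesis by simp
qed

lemma power_minus_injective_eq_signed_average:
  fixes d :: "'i \<Rightarrow> 'a::real_vector"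
  assumes ml: "multilinear_form p \<phi>" and fin: "finite I"
  shows "\<phi> (\<lambda>j. \<Sum>i\<in>I. d i) - (\<Sum>g \<in> {g. g \<in> {1..p} \<rightarrow>\<^sub>E I \<and> inj_on g {1..p}}. \<phi> (\<lambda>j. d (g j))) =
    - (\<Sum>\<tau> \<in> {\<tau>. \<tau> permutes {1..p}} - {id}. real_of_int (sign \<tau>) *
         (\<Sum>\<sigma>\<in>sign_tuples p I. \<phi> (\<lambda>j. \<Sum>i\<in>I. (\<sigma> j i * \<sigma> (\<tau> j) i) *\<^sub>R d i)) /
         real (card (sign_tuples p I)))"
proof -
  let ?N = "real (card (sign_tuples p I))"
  let ?T = "\<lambda>\<tau>. real_of_int (sign \<tau>) *
    (\<Sum>\<sigma>\<in>sign_tuples p I. \<phi> (\<lambda>j. \<Sum>i\<in>I. (\<sigma> j i * \<sigma> (\<tau> j) i) *\<^sub>R d i)) / ?N"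
  have "\<phi> (\<lambda>j. \<Sum>i\<in>I. (\<sigma> j i * \<sigma> j i) *\<^sub>R d i) = \<phi> (\<lambda>j. \<Sum>i\<in>I. d i)" if "\<sigma> \<in> sign_tuples p I" for \<sigma>
    using that by (intro multilinear_form_cong[OF ml] sum.cong refl)
      (auto simp: sign_vectors_mult_self[OF sign_tuples_component[OF that]])
  then have "?T id = \<phi> (\<lambda>j. \<Sum>i\<in>I. d i)"
    using card_sign_tuples_pos[OF fin, of p] by simp
  moreover have "(\<Sum>\<tau> | \<tau> permutes {1..p}. ?T \<tau>) = ?T id + (\<Sum>\<tau> \<in> {\<tau>. \<tau> permutes {1..p}} - {id}. ?T \<tau>)"
    using finite_permutations[of "{1..p}"] by (intro sum.remove) auto
  ultimately show ?thesis
    unfolding sum_injective_eq_signed_average[OF ml fin] by simp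
qed

lemma proj_tensor_norm_power_minus_injective_le_average:
  fixes d :: "'i \<Rightarrow> 'a::real_normed_vector"
  assumes fin: "finite I" and "p \<ge> 1"
  shows "proj_tensor_norm p
      (\<lambda>\<phi>. \<phi> (\<lambda>j. \<Sum>i\<in>I. d i) - (\<Sum>g \<in> {g. g \<in> {1..p} \<rightarrow>\<^sub>E I \<and> inj_on g {1..p}}. \<phi> (\<lambda>j. d (g j))))
    \<le> (\<Sum>\<tau> \<in> {\<tau>. \<tau> permutes {1..p}} - {id}.
         (\<Sum>\<sigma>\<in>sign_tuples p I. \<Prod>j\<in>{1..p}. norm (\<Sum>i\<in>I. (\<sigma> j i * \<sigma> (\<tau> j) i) *\<^sub>R d i)) /
         real (card (sign_tuples p I)))"
proof -
  let ?Q = "{\<tau>. \<tau> permutes {1..p}} - {id}"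
  let ?N = "real (card (sign_tuples p I))"
  define c where "c = (\<lambda>(\<tau>::nat \<Rightarrow> nat, \<sigma>::nat \<Rightarrow> 'i \<Rightarrow> real). - real_of_int (sign \<tau>) / ?N)"
  define x where "x = (\<lambda>(\<tau>::nat \<Rightarrow> nat, \<sigma>::nat \<Rightarrow> 'i \<Rightarrow> real) j. \<Sum>i\<in>I. (\<sigma> j i * \<sigma> (\<tau> j) i) *\<^sub>R d i)"
  have fin_Q: "finite (?Q \<times> sign_tuples p I)"
    using finite_permutations[of "{1..p}"] finite_sign_tuples[OF fin] by simp
  have abs_c: "\<bar>c k\<bar> = 1 / ?N" for k
    using card_sign_tuples_pos[OF fin, of p]
    by (simp add: c_def split_def flip: of_int_abs)
  have "proj_tensor_norm p
      (\<lambda>\<phi>. \<phi> (\<lambda>j. \<Sum>i\<in>I. d i) - (\<Sum>g \<in> {g. g \<in> {1..p} \<rightarrow>\<^sub>E I \<and> inj_on g {1..p}}. \<phi> (\<lambda>j. d (g j))))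
    \<le> (\<Sum>k \<in> ?Q \<times> sign_tuples p I. \<bar>c k\<bar> * (\<Prod>j\<in>{1..p}. norm (x k j)))"
    using fin_Q assms(2)
  proof (rule proj_tensor_norm_le)
    fix \<phi> :: "(nat \<Rightarrow> 'a) \<Rightarrow> real"
    assume "multilinear_form p \<phi>"
    then show "\<phi> (\<lambda>j. \<Sum>i\<in>I. d i) - (\<Sum>g \<in> {g. g \<in> {1..p} \<rightarrow>\<^sub>E I \<and> inj_on g {1..p}}. \<phi> (\<lambda>j. d (g j))) =
        (\<Sum>k \<in> ?Q \<times> sign_tuples p I. c k * \<phi> (x k))"
      by (subst power_minus_injective_eq_signed_average[OF _ fin])
        (simp_all add: sum.cartesian_product sum_distrib_left sum_divide_distrib c_def x_def split_def
          flip: sum_negf)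
  qed
  also have "\<dots> = (\<Sum>\<tau>\<in>?Q. (\<Sum>\<sigma>\<in>sign_tuples p I. \<Prod>j\<in>{1..p}. norm (x (\<tau>, \<sigma>) j)) / ?N)"
    by (simp add: abs_c sum.cartesian_product sum_divide_distrib)
  finally show ?thesis by (simp add: x_def)
qed

section \<open>Mean inequalities\<close>

lemma prod_le_sum_power_card:
  fixes z :: "'j \<Rightarrow> real"
  assumes "card J = n" "n > 0" "\<And>j. j \<in> J \<Longrightarrow> z j \<ge> 0"
  shows "(\<Prod>j\<in>J. z j) \<le> (\<Sum>j\<in>J. z j ^ n) / n"
proof -
  have J: "finite J" "J \<noteq> {}" using assms(1,2) card_ge_0_finite by auto
  have "(\<Prod>j\<in>J. z j) = root n ((\<Prod>j\<in>J. z j) ^ n)"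
    using assms by (simp add: real_root_power_cancel prod_nonneg)
  also have "\<dots> = (\<Prod>j\<in>J. z j ^ n) powr (1 / n)"
    using assms by (simp add: root_powr_inverse prod_nonneg prod_power_distrib)
  also have "\<dots> \<le> (\<Sum>j\<in>J. z j ^ n / n)"
    using arith_geom_mean[OF J, of "\<lambda>j. z j ^ n"] assms by simp
  finally show ?thesis by (simp add: sum_divide_distrib)
qed

lemma mult_power_le_weighted_mean:
  fixes x y :: real
  assumes "x \<ge> 0" "y \<ge> 0" "k \<le> p" "0 < p"
  shows "x ^ k * y ^ (p - k) \<le> (real k * x ^ p + real (p - k) * y ^ p) / real p"
proof -
  define z where "z = (\<lambda>j. if j < k then x else y)"
  have split: "{..<p} \<inter> {j. j < k} = {..<k}" "{..<p} \<inter> - {j. j < k} = {k..<p}"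
    using assms(3) by auto
  have "x ^ k * y ^ (p - k) = (\<Prod>j<p. z j)"
    by (simp add: z_def prod.If_cases split)
  also have "\<dots> \<le> (\<Sum>j<p. z j ^ p) / p"
    using assms by (intro prod_le_sum_power_card) (auto simp: z_def)
  also have "\<dots> = (real k * x ^ p + real (p - k) * y ^ p) / real p"
    by (simp add: z_def if_distrib[of "\<lambda>t. t ^ p"] sum.If_cases split)
  finally show ?thesis .
qed

lemma power_mean_le:
  fixes a :: "'r \<Rightarrow> real"
  assumes "finite R" "R \<noteq> {}" "k \<le> p" "0 < p" "\<And>r. r \<in> R \<Longrightarrow> a r \<ge> 0"
  shows "(\<Sum>r\<in>R. a r ^ k) / card R \<le> (((\<Sum>r\<in>R. a r ^ p) / card R) powr (1 / p)) ^ k"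
proof -
  define M where "M = ((\<Sum>r\<in>R. a r ^ p) / card R) powr (1 / p)"
  have R: "real (card R) > 0" using assms(1,2) by (simp add: card_gt_0_iff)
  have "(\<Sum>r\<in>R. a r ^ p) / card R \<ge> 0" using assms(5) by (simp add: sum_nonneg)
  then have M_pow: "M ^ p = (\<Sum>r\<in>R. a r ^ p) / card R" and "M \<ge> 0"
    using assms(4) by (simp_all add: M_def flip: root_powr_inverse)
  show ?thesis
  proof (cases "M = 0")
    case True
    then have "a r = 0" if "r \<in> R" for r
      using M_pow R assms that by (simp add: sum_nonneg_eq_0_iff power_0_left)
    then have "(\<Sum>r\<in>R. a r ^ k) / card R = M ^ k" using True R by simp
    then show ?thesis by (simp add: M_def)
  next
    case False
    then have M: "M > 0" using \<open>M \<ge> 0\<close> by simp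
    have "(\<Sum>r\<in>R. a r ^ k) / card R * M ^ (p - k) = (\<Sum>r\<in>R. a r ^ k * M ^ (p - k)) / card R"
      by (simp add: sum_distrib_right)
    also have "\<dots> \<le> (\<Sum>r\<in>R. (real k * a r ^ p + real (p - k) * M ^ p) / real p) / card R"
      using assms \<open>M \<ge> 0\<close> by (intro divide_right_mono sum_mono mult_power_le_weighted_mean) auto
    also have "\<dots> = M ^ p"
    proof -
      have "(\<Sum>r\<in>R. (real k * a r ^ p + real (p - k) * M ^ p) / real p) =
          (real k * (\<Sum>r\<in>R. a r ^ p) + card R * (real (p - k) * M ^ p)) / real p"
        by (simp add: sum_divide_distrib[symmetric] sum.distrib sum_distrib_left)
      also have "(\<Sum>r\<in>R. a r ^ p) = card R * M ^ p" using M_pow R by simp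
      finally show ?thesis
        using R assms(3,4) by (simp add: field_simps)
    qed
    also have "\<dots> = M ^ k * M ^ (p - k)"
      using assms(3) by (simp flip: power_add)
    finally have "(\<Sum>r\<in>R. a r ^ k) / card R * M ^ (p - k) \<le> M ^ k * M ^ (p - k)" .
    then show ?thesis
      unfolding M_def[symmetric] using M by (metis mult_right_le_imp_le zero_less_power)
  qed
qed

section \<open>Products of Rademacher sums\<close>

lemma sum_sign_tuples_mult_components:
  fixes G :: "('i \<Rightarrow> real) \<Rightarrow> real"
  assumes fin: "finite I" and jl: "j \<in> {1..p}" "l \<in> {1..p}" "j \<noteq> l"
    and G: "\<And>\<rho> \<rho>'. (\<And>i. i \<in> I \<Longrightarrow> \<rho> i = \<rho>' i) \<Longrightarrow> G \<rho> = G \<rho>'"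
  shows "(\<Sum>\<sigma>\<in>sign_tuples p I. G (\<lambda>i. \<sigma> j i * \<sigma> l i)) / card (sign_tuples p I) =
    (\<Sum>\<rho>\<in>sign_vectors I. G \<rho>) / card (sign_vectors I)"
proof -
  let ?N = "real (card (sign_vectors I))"
  \<comment> \<open>multiplying the \<open>j\<close>-th sign vector by the \<open>l\<close>-th is an involution of the sign tuples\<close>
  define \<Phi> where "\<Phi> = (\<lambda>\<sigma> :: nat \<Rightarrow> 'i \<Rightarrow> real. \<sigma>(j := restrict (\<lambda>i. \<sigma> j i * \<sigma> l i) I))"
  have \<Phi>_in: "\<Phi> \<sigma> \<in> sign_tuples p I" if \<sigma>: "\<sigma> \<in> sign_tuples p I" for \<sigma>
  proof -
    have "\<sigma> j i \<in> {-1, 1}" "\<sigma> l i \<in> {-1, 1}" if "i \<in> I" for i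
      using that sign_tuples_component[OF \<sigma> jl(1)] sign_tuples_component[OF \<sigma> jl(2)]
      by (auto simp: sign_vectors_def)
    then have "\<sigma> j i * \<sigma> l i \<in> {-1, 1}" if "i \<in> I" for i
      using that by fastforce
    then have "restrict (\<lambda>i. \<sigma> j i * \<sigma> l i) I \<in> sign_vectors I"
      by (simp add: sign_vectors_def)
    then show ?thesis
      using \<sigma> jl(1) by (auto simp: \<Phi>_def sign_tuples_def PiE_iff extensional_def)
  qed
  have \<Phi>_\<Phi>: "\<Phi> (\<Phi> \<sigma>) = \<sigma>" if "\<sigma> \<in> sign_tuples p I" for \<sigma>
    using jl sign_tuples_component[OF that jl(1)] sign_vectors_mult_self[OF sign_tuples_component[OF that jl(2)]]
    by (auto simp: \<Phi>_def fun_eq_iff mult.assoc sign_vectors_def PiE_iff extensional_def)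
  have "(\<Sum>\<sigma>\<in>sign_tuples p I. G (\<lambda>i. \<sigma> j i * \<sigma> l i)) = (\<Sum>\<sigma>\<in>sign_tuples p I. G (\<Phi> \<sigma> j))"
    by (intro sum.cong refl G) (simp add: \<Phi>_def)
  also have "\<dots> = (\<Sum>\<sigma>\<in>sign_tuples p I. G (\<sigma> j))"
    using \<Phi>_in \<Phi>_\<Phi> by (intro sum.reindex_bij_witness[where i = \<Phi> and j = \<Phi>]) auto
  also have "\<dots> = (\<Sum>\<sigma>\<in>sign_tuples p I. \<Prod>m\<in>{1..p}. if m = j then G (\<sigma> m) else 1)"
    using jl(1) by simp
  also have "\<dots> = (\<Prod>m\<in>{1..p}. \<Sum>\<rho>\<in>sign_vectors I. if m = j then G \<rho> else 1)"
    by (rule sum_sign_tuples_prod[OF fin])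
  also have "\<dots> = (\<Sum>\<rho>\<in>sign_vectors I. G \<rho>) * (\<Prod>m\<in>{1..p} - {j}. ?N)"
  proof -
    have "(\<Prod>m\<in>{1..p} - {j}. \<Sum>\<rho>\<in>sign_vectors I. if m = j then G \<rho> else 1) = (\<Prod>m\<in>{1..p} - {j}. ?N)"
      by (intro prod.cong) auto
    then show ?thesis
      using prod.remove[OF _ jl(1), of "\<lambda>m. \<Sum>\<rho>\<in>sign_vectors I. if m = j then G \<rho> else 1"] by simp
  qed
  also have "\<dots> = (\<Sum>\<rho>\<in>sign_vectors I. G \<rho>) * ?N ^ (p - 1)"
    using jl(1) by simp
  also have "\<dots> = (\<Sum>\<rho>\<in>sign_vectors I. G \<rho>) / ?N * card (sign_tuples p I)"
    using jl(1) card_sign_vectors[OF fin]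
    by (simp add: card_sign_tuples[OF fin] power_diff)
  finally show ?thesis
    using card_sign_tuples_pos[OF fin, of p] by (simp add: field_simps)
qed

definition rademacher_moment :: "nat \<Rightarrow> 'i set \<Rightarrow> ('i \<Rightarrow> 'a::real_normed_vector) \<Rightarrow> real" where
  "rademacher_moment p I d =
     ((\<Sum>\<rho>\<in>sign_vectors I. norm (\<Sum>i\<in>I. \<rho> i *\<^sub>R d i) ^ p) / card (sign_vectors I)) powr (1 / p)"

lemma average_prod_norm_moved_le:
  fixes d :: "'i \<Rightarrow> 'a::real_normed_vector" and l :: "nat \<Rightarrow> nat"
  assumes fin: "finite I" and A: "A \<subseteq> {1..p}" "A \<noteq> {}"
    and l: "\<And>j. j \<in> A \<Longrightarrow> l j \<in> {1..p}" "\<And>j. j \<in> A \<Longrightarrow> l j \<noteq> j"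
  shows "(\<Sum>\<sigma>\<in>sign_tuples p I. \<Prod>j\<in>A. norm (\<Sum>i\<in>I. (\<sigma> j i * \<sigma> (l j) i) *\<^sub>R d i)) /
      card (sign_tuples p I) \<le> rademacher_moment p I d ^ card A"
proof -
  define F where "F = (\<lambda>\<sigma> j. norm (\<Sum>i\<in>I. (\<sigma> j i * \<sigma> (l j) i) *\<^sub>R d i))"
  define k where "k = card A"
  let ?N = "real (card (sign_tuples p I))"
  let ?avg = "\<lambda>k. (\<Sum>\<rho>\<in>sign_vectors I. norm (\<Sum>i\<in>I. \<rho> i *\<^sub>R d i) ^ k) / card (sign_vectors I)"
  have k: "0 < k" "k \<le> p"
    using A finite_subset[OF A(1)] card_mono[OF _ A(1)] by (auto simp: k_def card_gt_0_iff)
  have "(\<Sum>\<sigma>\<in>sign_tuples p I. \<Prod>j\<in>A. F \<sigma> j) / ?N \<le> (\<Sum>\<sigma>\<in>sign_tuples p I. (\<Sum>j\<in>A. F \<sigma> j ^ k) / k) / ?N"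
    using k by (intro divide_right_mono sum_mono prod_le_sum_power_card) (auto simp: k_def F_def)
  also have "\<dots> = (\<Sum>j\<in>A. (\<Sum>\<sigma>\<in>sign_tuples p I. F \<sigma> j ^ k) / ?N) / k"
    by (simp add: sum_divide_distrib[symmetric] sum.swap[of _ A])
  also have "\<dots> = (\<Sum>j\<in>A. ?avg k) / k"
  proof (intro arg_cong[where f = "\<lambda>x. x / real k"] sum.cong refl)
    fix j assume j: "j \<in> A"
    show "(\<Sum>\<sigma>\<in>sign_tuples p I. F \<sigma> j ^ k) / ?N = ?avg k"
      unfolding F_def using A(1) j l[OF j]
      by (intro sum_sign_tuples_mult_components[OF fin])
        (auto intro!: arg_cong[where f = "\<lambda>v. norm v ^ k"] sum.cong)
  qed
  also have "\<dots> = ?avg k"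
    using k by (simp add: k_def)
  also have "\<dots> \<le> rademacher_moment p I d ^ k"
    unfolding rademacher_moment_def using k card_sign_vectors[OF fin] finite_sign_vectors[OF fin]
    by (intro power_mean_le) auto
  finally show ?thesis by (simp add: F_def k_def)
qed

lemma average_prod_norm_le:
  fixes d :: "'i \<Rightarrow> 'a::real_normed_vector"
  assumes fin: "finite I" and \<tau>: "\<tau> permutes {1..p}" "\<tau> \<noteq> id"
  shows "(\<Sum>\<sigma>\<in>sign_tuples p I. \<Prod>j\<in>{1..p}. norm (\<Sum>i\<in>I. (\<sigma> j i * \<sigma> (\<tau> j) i) *\<^sub>R d i)) /
      card (sign_tuples p I)
    \<le> norm (\<Sum>i\<in>I. d i) ^ card {j\<in>{1..p}. \<tau> j = j} *
       rademacher_moment p I d ^ (p - card {j\<in>{1..p}. \<tau> j = j})"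
proof -
  define F where "F = (\<lambda>\<sigma> j. norm (\<Sum>i\<in>I. (\<sigma> j i * \<sigma> (\<tau> j) i) *\<^sub>R d i))"
  define B where "B = {j\<in>{1..p}. \<tau> j = j}"
  define A where "A = {1..p} - B"
  let ?N = "real (card (sign_tuples p I))"
  have "A \<noteq> {}"
  proof
    assume "A = {}"
    then have "\<tau> j = j" for j
      using permutes_not_in[OF \<tau>(1), of j] unfolding A_def B_def by (cases "j \<in> {1..p}") auto
    then show False using \<tau>(2) by auto
  qed
  then have moved: "(\<Sum>\<sigma>\<in>sign_tuples p I. \<Prod>j\<in>A. F \<sigma> j) / ?N \<le> rademacher_moment p I d ^ card A"
    unfolding F_def using permutes_in_image[OF \<tau>(1)]
    by (intro average_prod_norm_moved_le[OF fin]) (auto simp: A_def B_def)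
  have "(\<Prod>j\<in>{1..p}. F \<sigma> j) = norm (\<Sum>i\<in>I. d i) ^ card B * (\<Prod>j\<in>A. F \<sigma> j)"
    if \<sigma>: "\<sigma> \<in> sign_tuples p I" for \<sigma>
  proof -
    have "F \<sigma> j = norm (\<Sum>i\<in>I. d i)" if "j \<in> B" for j
      using that sign_vectors_mult_self[OF sign_tuples_component[OF \<sigma>]]
      unfolding F_def B_def by (auto intro!: arg_cong[where f = norm] sum.cong)
    moreover have "{1..p} = B \<union> A" "B \<inter> A = {}" "finite B" "finite A"
      unfolding A_def B_def by auto
    ultimately show ?thesis by (simp add: prod.union_disjoint)
  qed
  then have "(\<Sum>\<sigma>\<in>sign_tuples p I. \<Prod>j\<in>{1..p}. F \<sigma> j) / ?N =
      norm (\<Sum>i\<in>I. d i) ^ card B * ((\<Sum>\<sigma>\<in>sign_tuples p I. \<Prod>j\<in>A. F \<sigma> j) / ?N)"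
    by (simp add: sum_distrib_left)
  also have "\<dots> \<le> norm (\<Sum>i\<in>I. d i) ^ card B * rademacher_moment p I d ^ card A"
    using moved by (rule mult_left_mono) simp
  also have "card A = p - card B"
    unfolding A_def B_def by (subst card_Diff_subset) auto
  finally show ?thesis by (simp add: F_def B_def)
qed

section \<open>Counting permutations by fixed points\<close>

lemma card_fixpoints_le:
  assumes "finite S" "\<tau> permutes S" "\<tau> \<noteq> id"
  shows "card {j\<in>S. \<tau> j = j} \<le> card S - 2"
proof -
  define A where "A = {j\<in>S. \<tau> j \<noteq> j}"
  obtain a where a: "\<tau> a \<noteq> a" using assms(3) by (auto simp: fun_eq_iff)
  then have "a \<in> S" using permutes_not_in[OF assms(2)] by blast
  moreover have "\<tau> (\<tau> a) \<noteq> \<tau> a"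
    using a permutes_inj[OF assms(2)] by (metis injD)
  ultimately have "{a, \<tau> a} \<subseteq> A"
    using a permutes_in_image[OF assms(2)] by (simp add: A_def)
  then have "card {a, \<tau> a} \<le> card A"
    using assms(1) by (intro card_mono) (simp_all add: A_def)
  then have "2 \<le> card A" using a by simp
  moreover have "card S = card {j\<in>S. \<tau> j = j} + card A"
  proof -
    have "S = {j\<in>S. \<tau> j = j} \<union> A" "{j\<in>S. \<tau> j = j} \<inter> A = {}" by (auto simp: A_def)
    then show ?thesis using assms(1) card_Un_disjoint by (metis finite_Un)
  qed
  ultimately show ?thesis by linarith
qed

lemma card_permutes_with_fixpoints_le:
  assumes "finite S"
  shows "card {\<tau>. \<tau> permutes S \<and> card {j\<in>S. \<tau> j = j} = s} \<le> (card S choose s) * fact (card S - s)"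
proof -
  let ?Fs = "{F. F \<subseteq> S \<and> card F = s}"
  have finFs: "finite ?Fs" by (intro finite_Collect_conjI disjI1 finite_Collect_subsets assms)
  have sub: "{\<tau>. \<tau> permutes S \<and> card {j\<in>S. \<tau> j = j} = s} \<subseteq> (\<Union>F\<in>?Fs. {\<tau>. \<tau> permutes (S - F)})"
  proof
    fix \<tau> assume \<tau>: "\<tau> \<in> {\<tau>. \<tau> permutes S \<and> card {j\<in>S. \<tau> j = j} = s}"
    then have "\<tau> permutes S" by simp
    then have "\<tau> permutes (S - {j\<in>S. \<tau> j = j})"
      by (rule permutes_superset) blast
    moreover have "{j\<in>S. \<tau> j = j} \<in> ?Fs" using \<tau> by auto
    ultimately show "\<tau> \<in> (\<Union>F\<in>?Fs. {\<tau>. \<tau> permutes (S - F)})" by blast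
  qed
  have "card {\<tau>. \<tau> permutes S \<and> card {j\<in>S. \<tau> j = j} = s} \<le> card (\<Union>F\<in>?Fs. {\<tau>. \<tau> permutes (S - F)})"
  proof (rule card_mono[OF _ sub])
    show "finite (\<Union>F\<in>?Fs. {\<tau>. \<tau> permutes (S - F)})"
      by (rule finite_UN_I[OF finFs]) (rule finite_permutations, simp add: assms)
  qed
  also have "\<dots> \<le> (\<Sum>F\<in>?Fs. card {\<tau>. \<tau> permutes (S - F)})"
    by (rule card_UN_le[OF finFs])
  also have "\<dots> = (\<Sum>F\<in>?Fs. fact (card S - s))"
  proof (rule sum.cong[OF refl])
    fix F assume "F \<in> ?Fs"
    then have "F \<subseteq> S" "card F = s" by auto
    then have "card (S - F) = card S - s"
      using card_Diff_subset[OF finite_subset[OF _ assms]] by simp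
    then show "card {\<tau>. \<tau> permutes (S - F)} = fact (card S - s)"
      using assms by (intro card_permutations) auto
  qed
  also have "\<dots> = (card S choose s) * fact (card S - s)"
    using n_subsets[OF assms, of s] by simp
  finally show ?thesis .
qed

lemma sum_permutes_by_fixpoints_le:
  fixes w :: "nat \<Rightarrow> real"
  assumes "finite S" "\<And>s. w s \<ge> 0"
  shows "(\<Sum>\<tau> \<in> {\<tau>. \<tau> permutes S} - {id}. w (card {j\<in>S. \<tau> j = j}))
    \<le> (\<Sum>s = 0..card S - 2. real (card S choose s) * fact (card S - s) * w s)"
proof -
  let ?Q = "{\<tau>. \<tau> permutes S} - {id}"
  let ?fix = "\<lambda>\<tau>. card {j\<in>S. \<tau> j = j}"
  have finQ: "finite ?Q" using finite_permutations[OF assms(1)] by simp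
  have "(\<Sum>\<tau>\<in>?Q. w (?fix \<tau>)) = (\<Sum>s\<in>?fix ` ?Q. \<Sum>\<tau>\<in>{\<tau>\<in>?Q. ?fix \<tau> = s}. w (?fix \<tau>))"
    by (rule sum.image_gen[OF finQ])
  also have "\<dots> = (\<Sum>s\<in>?fix ` ?Q. real (card {\<tau>\<in>?Q. ?fix \<tau> = s}) * w s)"
    by (intro sum.cong refl) simp
  also have "\<dots> \<le> (\<Sum>s = 0..card S - 2. real (card {\<tau>\<in>?Q. ?fix \<tau> = s}) * w s)"
  proof (rule sum_mono2)
    show "?fix ` ?Q \<subseteq> {0..card S - 2}"
    proof
      fix s assume "s \<in> ?fix ` ?Q"
      then obtain \<tau> where "\<tau> permutes S" "\<tau> \<noteq> id" "s = ?fix \<tau>" by auto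
      then show "s \<in> {0..card S - 2}" using card_fixpoints_le[OF assms(1)] by simp
    qed
  qed (use assms(2) in simp_all)
  also have "\<dots> \<le> (\<Sum>s = 0..card S - 2. real (card S choose s) * fact (card S - s) * w s)"
  proof (rule sum_mono)
    fix s
    have "card {\<tau>\<in>?Q. ?fix \<tau> = s} \<le> card {\<tau>. \<tau> permutes S \<and> ?fix \<tau> = s}"
    proof (rule card_mono)
      show "finite {\<tau>. \<tau> permutes S \<and> ?fix \<tau> = s}"
        using finite_permutations[OF assms(1)] by (rule finite_subset[rotated]) auto
    qed auto
    also have "\<dots> \<le> (card S choose s) * fact (card S - s)"
      by (rule card_permutes_with_fixpoints_le[OF assms(1)])
    finally have "real (card {\<tau>\<in>?Q. ?fix \<tau> = s}) \<le> real (card S choose s) * fact (card S - s)"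
      by (simp only: of_nat_le_iff[symmetric, where 'a = real] of_nat_mult of_nat_fact)
    then show "real (card {\<tau>\<in>?Q. ?fix \<tau> = s}) * w s \<le> real (card S choose s) * fact (card S - s) * w s"
      using assms(2) by (intro mult_right_mono) auto
  qed
  finally show ?thesis .
qed

section \<open>Rademacher sums as random variables\<close>

lemma LIMSEQ_floor_mult_divide: "(\<lambda>n. real_of_int \<lfloor>real n * t\<rfloor> / real n) \<longlonglongrightarrow> t"
proof (rule tendsto_sandwich[where f = "\<lambda>n. t - 1 / real n" and h = "\<lambda>n. t"])
  show "\<forall>\<^sub>F n in sequentially. t - 1 / real n \<le> real_of_int \<lfloor>real n * t\<rfloor> / real n"
    using eventually_gt_at_top[of "0::nat"]
  proof eventually_elim
    case (elim n)
    have "(real n * t - 1) / real n \<le> real_of_int \<lfloor>real n * t\<rfloor> / real n"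
      by (rule divide_right_mono) linarith+
    then show ?case using elim by (simp add: diff_divide_distrib)
  qed
  show "\<forall>\<^sub>F n in sequentially. real_of_int \<lfloor>real n * t\<rfloor> / real n \<le> t"
    using eventually_gt_at_top[of "0::nat"]
  proof eventually_elim
    case (elim n)
    have "real_of_int \<lfloor>real n * t\<rfloor> \<le> real n * t" by linarith
    then show ?case using elim by (simp add: field_simps)
  qed
  show "(\<lambda>n. t - 1 / real n) \<longlonglongrightarrow> t"
    using tendsto_diff[OF tendsto_const[of t] lim_1_over_n] by simp
qed simp

text \<open>The proof approximates \<open>g\<close> by the countably-valued functions \<open>\<lfloor>n g\<rfloor> / n\<close>.\<close>
lemma borel_measurable_continuous_compose_param:
  fixes h :: "real \<Rightarrow> 'm \<Rightarrow> real"
  assumes h: "\<And>t. h t \<in> borel_measurable M" and cont: "\<And>\<omega>. continuous_on UNIV (\<lambda>t. h t \<omega>)"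
    and g: "g \<in> borel_measurable M"
  shows "(\<lambda>\<omega>. h (g \<omega>) \<omega>) \<in> borel_measurable M"
proof (rule borel_measurable_LIMSEQ_real)
  fix \<omega>
  show "(\<lambda>n. h (real_of_int \<lfloor>real n * g \<omega>\<rfloor> / real n) \<omega>) \<longlonglongrightarrow> h (g \<omega>) \<omega>"
    using cont[of \<omega>] by (intro isCont_tendsto_compose[OF _ LIMSEQ_floor_mult_divide])
      (simp add: continuous_on_eq_continuous_at)
next
  fix n :: nat
  have "(\<lambda>\<omega>. \<lfloor>real n * g \<omega>\<rfloor>) \<in> M \<rightarrow>\<^sub>M count_space UNIV"
    using g by (intro measurable_compose[OF _ measurable_real_floor]) simp
  then show "(\<lambda>\<omega>. h (real_of_int \<lfloor>real n * g \<omega>\<rfloor> / real n) \<omega>) \<in> borel_measurable M"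
    by (rule measurable_compose_countable[where f = "\<lambda>k. h (real_of_int k / real n)", OF h])
qed

text \<open>The Borel measurability of sums needs a second-countable range, which a general normed space
  does not have; so the sum is handled one real coefficient at a time.\<close>
lemma borel_measurable_norm_sum_scaleR:
  fixes d :: "'i \<Rightarrow> 'a::real_normed_vector"
  assumes "finite J" "\<And>i. i \<in> J \<Longrightarrow> \<epsilon> i \<in> borel_measurable M"
  shows "(\<lambda>\<omega>. norm (v + (\<Sum>i\<in>J. \<epsilon> i \<omega> *\<^sub>R d i))) \<in> borel_measurable M"
  using assms
proof (induction J arbitrary: v rule: finite_induct)
  case empty
  then show ?case by simp
next
  case (insert j J)
  let ?h = "\<lambda>t \<omega>. norm ((v + t *\<^sub>R d j) + (\<Sum>i\<in>J. \<epsilon> i \<omega> *\<^sub>R d i))"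
  have "?h t \<in> borel_measurable M" for t
    by (rule insert.IH) (rule insert.prems, simp)
  moreover have "continuous_on UNIV (\<lambda>t. ?h t \<omega>)" for \<omega>
    by (intro continuous_intros)
  ultimately have "(\<lambda>\<omega>. ?h (\<epsilon> j \<omega>) \<omega>) \<in> borel_measurable M"
    by (rule borel_measurable_continuous_compose_param) (rule insert.prems, simp)
  then show ?case using insert by (simp add: add.assoc)
qed

context prob_space
begin

lemma AE_sign_vector:
  assumes "finite I" "\<And>i. i \<in> I \<Longrightarrow> \<epsilon> i \<in> borel_measurable M"
    and "\<And>i. i \<in> I \<Longrightarrow> prob {\<omega> \<in> space M. \<epsilon> i \<omega> = 1} = 1/2"
    and "\<And>i. i \<in> I \<Longrightarrow> prob {\<omega> \<in> space M. \<epsilon> i \<omega> = -1} = 1/2"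
  shows "AE \<omega> in M. restrict (\<lambda>i. \<epsilon> i \<omega>) I \<in> sign_vectors I"
proof -
  have "AE \<omega> in M. \<epsilon> i \<omega> \<in> {-1, 1}" if i: "i \<in> I" for i
  proof -
    have ev: "{\<omega> \<in> space M. \<epsilon> i \<omega> = c} \<in> events" for c
      using assms(2)[OF i] by measurable
    have "prob ({\<omega> \<in> space M. \<epsilon> i \<omega> = -1} \<union> {\<omega> \<in> space M. \<epsilon> i \<omega> = 1}) = 1"
      using assms(3,4)[OF i] ev by (subst finite_measure_Union) auto
    then have "AE \<omega> in M. \<omega> \<in> {\<omega> \<in> space M. \<epsilon> i \<omega> = -1} \<union> {\<omega> \<in> space M. \<epsilon> i \<omega> = 1}"
      by (rule AE_prob_1)
    then show ?thesis by eventually_elim auto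
  qed
  then have "AE \<omega> in M. \<forall>i\<in>I. \<epsilon> i \<omega> \<in> {-1, 1}"
    by (rule AE_finite_allI[OF assms(1)])
  then show ?thesis by eventually_elim (simp add: sign_vectors_def)
qed

lemma prob_sign_pattern:
  assumes "finite I" "indep_vars (\<lambda>_. borel) \<epsilon> I"
    and "\<And>i. i \<in> I \<Longrightarrow> prob {\<omega> \<in> space M. \<epsilon> i \<omega> = 1} = 1/2"
    and "\<And>i. i \<in> I \<Longrightarrow> prob {\<omega> \<in> space M. \<epsilon> i \<omega> = -1} = 1/2"
    and "\<rho> \<in> sign_vectors I"
  shows "prob {\<omega> \<in> space M. \<forall>i\<in>I. \<epsilon> i \<omega> = \<rho> i} = 1 / card (sign_vectors I)"
proof (cases "I = {}")
  case True
  then show ?thesis by (simp add: prob_space sign_vectors_def)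
next
  case False
  have "{\<omega> \<in> space M. \<forall>i\<in>I. \<epsilon> i \<omega> = \<rho> i} = (\<Inter>i\<in>I. \<epsilon> i -` {\<rho> i} \<inter> space M)"
    using False by auto
  then have "prob {\<omega> \<in> space M. \<forall>i\<in>I. \<epsilon> i \<omega> = \<rho> i} = (\<Prod>i\<in>I. prob (\<epsilon> i -` {\<rho> i} \<inter> space M))"
    using indep_varsD[OF assms(2) False assms(1)] by simp
  also have "\<dots> = (\<Prod>i\<in>I. 1 / 2)"
  proof (rule prod.cong[OF refl])
    fix i assume i: "i \<in> I"
    have "\<rho> i = -1 \<or> \<rho> i = 1" using assms(5) i by (auto simp: sign_vectors_def)
    moreover have "\<epsilon> i -` {\<rho> i} \<inter> space M = {\<omega> \<in> space M. \<epsilon> i \<omega> = \<rho> i}" by auto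
    ultimately show "prob (\<epsilon> i -` {\<rho> i} \<inter> space M) = 1 / 2" using assms(3,4)[OF i] by auto
  qed
  finally show ?thesis
    using assms(1) by (simp add: card_sign_vectors power_one_over)
qed

lemma integral_norm_rademacher_sum_power:
  fixes d :: "'i \<Rightarrow> 'b::real_normed_vector"
  assumes fin: "finite I" and ind: "indep_vars (\<lambda>_. borel) \<epsilon> I"
    and "\<And>i. i \<in> I \<Longrightarrow> prob {\<omega> \<in> space M. \<epsilon> i \<omega> = 1} = 1/2"
    and "\<And>i. i \<in> I \<Longrightarrow> prob {\<omega> \<in> space M. \<epsilon> i \<omega> = -1} = 1/2"
  shows "integral\<^sup>L M (\<lambda>\<omega>. norm (\<Sum>i\<in>I. \<epsilon> i \<omega> *\<^sub>R d i) ^ p) =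
    (\<Sum>\<rho>\<in>sign_vectors I. norm (\<Sum>i\<in>I. \<rho> i *\<^sub>R d i) ^ p) / card (sign_vectors I)"
proof -
  define c where "c = (\<lambda>\<rho> :: 'i \<Rightarrow> real. norm (\<Sum>i\<in>I. \<rho> i *\<^sub>R d i) ^ p)"
  define E where "E = (\<lambda>\<rho> :: 'i \<Rightarrow> real. {\<omega> \<in> space M. \<forall>i\<in>I. \<epsilon> i \<omega> = \<rho> i})"
  have meas: "\<epsilon> i \<in> borel_measurable M" if "i \<in> I" for i
    using ind that unfolding indep_vars_def2 by auto
  have E: "E \<rho> \<in> events" for \<rho>
    using fin meas unfolding E_def by measurable
  have "AE \<omega> in M. restrict (\<lambda>i. \<epsilon> i \<omega>) I \<in> sign_vectors I"
    using fin meas assms(3,4) by (rule AE_sign_vector)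
  then have "AE \<omega> in M. norm (\<Sum>i\<in>I. \<epsilon> i \<omega> *\<^sub>R d i) ^ p = (\<Sum>\<rho>\<in>sign_vectors I. c \<rho> * indicator (E \<rho>) \<omega>)"
    using AE_space
  proof eventually_elim
    case (elim \<omega>)
    let ?r = "restrict (\<lambda>i. \<epsilon> i \<omega>) I"
    have "c \<rho> * indicator (E \<rho>) \<omega> = (if \<rho> = ?r then c \<rho> else 0)" if "\<rho> \<in> sign_vectors I" for \<rho>
      using that elim(2) by (auto simp: E_def indicator_def sign_vectors_def PiE_iff extensional_def fun_eq_iff)
    then have "(\<Sum>\<rho>\<in>sign_vectors I. c \<rho> * indicator (E \<rho>) \<omega>) = c ?r"
      using elim(1) finite_sign_vectors[OF fin] by simp
    then show ?case by (simp add: c_def)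
  qed
  then have "integral\<^sup>L M (\<lambda>\<omega>. norm (\<Sum>i\<in>I. \<epsilon> i \<omega> *\<^sub>R d i) ^ p) =
      integral\<^sup>L M (\<lambda>\<omega>. \<Sum>\<rho>\<in>sign_vectors I. c \<rho> * indicator (E \<rho>) \<omega>)"
    using borel_measurable_norm_sum_scaleR[OF fin meas, where v = 0 and d = d] E by (intro integral_cong_AE) auto
  also have "\<dots> = (\<Sum>\<rho>\<in>sign_vectors I. c \<rho> * prob (E \<rho>))"
    using E by (simp add: emeasure_eq_measure)
  also have "\<dots> = (\<Sum>\<rho>\<in>sign_vectors I. c \<rho>) / card (sign_vectors I)"
    using prob_sign_pattern[OF fin ind assms(3,4)] by (simp add: E_def sum_divide_distrib)
  finally show ?thesis by (simp add: c_def)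
qed

end

theorem proj_tensor_norm_power_minus_injective_le:
  fixes d :: "'i \<Rightarrow> 'a::real_normed_vector"
  assumes "finite I" "p \<ge> 1"
  shows "proj_tensor_norm p
      (\<lambda>\<phi>. \<phi> (\<lambda>j. \<Sum>i\<in>I. d i) - (\<Sum>g \<in> {g. g \<in> {1..p} \<rightarrow>\<^sub>E I \<and> inj_on g {1..p}}. \<phi> (\<lambda>j. d (g j))))
    \<le> (\<Sum>s = 0..p - 2. real (p choose s) * fact (p - s) *
         norm (\<Sum>i\<in>I. d i) ^ s * rademacher_moment p I d ^ (p - s))"
proof -
  let ?fix = "\<lambda>\<tau>. card {j\<in>{1..p}. \<tau> j = j}"
  have "proj_tensor_norm p
      (\<lambda>\<phi>. \<phi> (\<lambda>j. \<Sum>i\<in>I. d i) - (\<Sum>g \<in> {g. g \<in> {1..p} \<rightarrow>\<^sub>E I \<and> inj_on g {1..p}}. \<phi> (\<lambda>j. d (g j))))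
    \<le> (\<Sum>\<tau> \<in> {\<tau>. \<tau> permutes {1..p}} - {id}.
         (\<Sum>\<sigma>\<in>sign_tuples p I. \<Prod>j\<in>{1..p}. norm (\<Sum>i\<in>I. (\<sigma> j i * \<sigma> (\<tau> j) i) *\<^sub>R d i)) /
         card (sign_tuples p I))"
    using assms by (rule proj_tensor_norm_power_minus_injective_le_average)
  also have "\<dots> \<le> (\<Sum>\<tau> \<in> {\<tau>. \<tau> permutes {1..p}} - {id}.
      norm (\<Sum>i\<in>I. d i) ^ ?fix \<tau> * rademacher_moment p I d ^ (p - ?fix \<tau>))"
    using assms(1) by (intro sum_mono average_prod_norm_le) auto
  also have "\<dots> \<le> (\<Sum>s = 0..p - 2. real (p choose s) * fact (p - s) *
      (norm (\<Sum>i\<in>I. d i) ^ s * rademacher_moment p I d ^ (p - s)))"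
    using sum_permutes_by_fixpoints_le[of "{1..p}" "\<lambda>s. norm (\<Sum>i\<in>I. d i) ^ s * rademacher_moment p I d ^ (p - s)"]
    by (simp add: rademacher_moment_def)
  finally show ?thesis by (simp add: mult.assoc)
qed

theorem corollary5p2:
  fixes p :: nat and I :: "'i set" and d :: "'i \<Rightarrow> 'a::banach"
    and M :: "'m measure" and \<epsilon> :: "'i \<Rightarrow> 'm \<Rightarrow> real"
  assumes "p \<ge> 2"
    and "finite I"
    and "prob_space M"
    and "prob_space.indep_vars M (\<lambda>_. borel) \<epsilon> I"
    and "\<And>i. i \<in> I \<Longrightarrow> measure M {\<omega> \<in> space M. \<epsilon> i \<omega> = 1} = 1/2"
    and "\<And>i. i \<in> I \<Longrightarrow> measure M {\<omega> \<in> space M. \<epsilon> i \<omega> = -1} = 1/2"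
  defines "f \<equiv> (\<Sum>i\<in>I. d i)"
    and "S \<equiv> (integral\<^sup>L M (\<lambda>\<omega>. norm (\<Sum>i\<in>I. \<epsilon> i \<omega> *\<^sub>R d i) ^ p)) powr (1 / real p)"
  shows "proj_tensor_norm p
           (\<lambda>\<phi>. \<phi> (\<lambda>j. f) - (\<Sum>g \<in> {g. g \<in> {1..p} \<rightarrow>\<^sub>E I \<and> inj_on g {1..p}}. \<phi> (\<lambda>j. d (g j))))
         \<le> (\<Sum>s=0..p-2. real (p choose s) * fact (p - s) * norm f ^ s * S ^ (p - s))"
proof -
  interpret prob_space M by fact
  have S: "S = rademacher_moment p I d"
    unfolding S_def rademacher_moment_def
    using integral_norm_rademacher_sum_power[OF assms(2,4,5,6), where d = d and p = p] by simp
  show ?thesis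
    unfolding f_def S using assms(1) by (intro proj_tensor_norm_power_minus_injective_le[OF assms(2)]) simp
qed

end
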